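(* Let $(\Sigma^{(n)})_{n\ge1}$ be a sequence of positive semidefinite matrices (of dimensions $d_n\times d_n$). Suppose that for each $n$ there is a covariance splitting $\Sigma^{(n)}=\Sigma_1\oplus\Sigma_2$ such that, as $n\to\infty$, $$\operatorname{rank}(\Sigma_1)=o(n),\qquad \operatorname{Tr}\Sigma_2=o(n),\qquad \frac{(\operatorname{Tr}\Sigma_2)^2}{\operatorname{Tr}(\Sigma_2^2)}=\omega(n).$$ Then for each $n$ there is a (possibly different) covariance splitting $\Sigma^{(n)}=\Sigma_1'\oplus\Sigma_2'$ such that $$\operatorname{rank}(\Sigma_1')=o(n),\quad \operatorname{Tr}\Sigma_2'=o(n),\quad \frac{\operatorname{Tr}\Sigma_2'}{\|\Sigma_2'\|_{op}}=\omega(n),\quad \frac{(\operatorname{Tr}\Sigma_2')^2}{\operatorname{Tr}((\Sigma_2')^2)}=\omega(n).$$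
   Context: Covariance splitting: $\Sigma=\Sigma_1\oplus\Sigma_2$ means $\Sigma=\Sigma_1+\Sigma_2$ with $\Sigma_1,\Sigma_2$ positive semidefinite and with orthogonal column spaces. $\|\cdot\|_{op}$ is the operator norm. *)

theory Defs
  imports "Jordan_Normal_Form.DL_Rank" "HOL-Library.Landau_Symbols"
begin

definition mat_trace :: "real mat \<Rightarrow> real" where
  "mat_trace A = (\<Sum>i<dim_row A. A $$ (i, i))"

definition psd :: "real mat \<Rightarrow> bool" where
  "psd A \<longleftrightarrow> A \<in> carrier_mat (dim_row A) (dim_row A) \<and> A\<^sup>T = A \<and>
     (\<forall>x \<in> carrier_vec (dim_row A). x \<bullet> (A *\<^sub>v x) \<ge> 0)"

definition col_space :: "real mat \<Rightarrow> real vec set" where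
  "col_space A = {A *\<^sub>v x | x. x \<in> carrier_vec (dim_col A)}"

definition cov_splitting :: "nat \<Rightarrow> real mat \<Rightarrow> real mat \<Rightarrow> real mat \<Rightarrow> bool" where
  "cov_splitting d S S1 S2 \<longleftrightarrow>
     S1 \<in> carrier_mat d d \<and> S2 \<in> carrier_mat d d \<and> psd S1 \<and> psd S2 \<and>
     S = S1 + S2 \<and> (\<forall>u \<in> col_space S1. \<forall>v \<in> col_space S2. u \<bullet> v = 0)"

definition op_norm :: "real mat \<Rightarrow> real" where
  "op_norm A = Sup {sqrt ((A *\<^sub>v x) \<bullet> (A *\<^sub>v x)) | x.
      x \<in> carrier_vec (dim_col A) \<and> x \<bullet> x \<le> 1}"

end

theory Submission
  imports Defs "Jordan_Normal_Form.Char_Poly"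
begin

text \<open>Diagonalise the second part of the splitting, S2 = Q diag(l) Q^T, and move every
eigendirection with l_i > tau into the low-rank part. By Chebyshev's inequality this raises the
rank by at most tr(S2^2)/tau^2 and lowers the trace by at most tr(S2^2)/tau, while the new second
part has operator norm at most tau. Writing r = (tr S2)^2/tr(S2^2) = omega(n) and
g = (r/n)^(1/4), which tends to infinity, the threshold tau = tr S2/(n g) adds rank n/g^2 = o(n)
and keeps at least half of the trace, so the new ratio of trace to operator norm is at least
n g/2 = omega(n) and the new effective rank is at least r/4.\<close>

section \<open>Orthogonal diagonalisation of real symmetric matrices\<close>

locale real_orthogonal =
  fixes n :: nat and Q :: "real mat"
  assumes carrier: "Q \<in> carrier_mat n n"
    and transpose_mult_self: "Q\<^sup>T * Q = 1\<^sub>m n"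
begin

lemma carrier_transpose: "Q\<^sup>T \<in> carrier_mat n n"
  using carrier by simp

lemma mult_transpose_self: "Q * Q\<^sup>T = 1\<^sub>m n"
  using mat_mult_left_right_inverse[OF carrier_transpose carrier transpose_mult_self] .

lemma transpose_mult_vec_cancel: "x \<in> carrier_vec n \<Longrightarrow> Q\<^sup>T *\<^sub>v (Q *\<^sub>v x) = x"
  using assoc_mult_mat_vec[OF carrier_transpose carrier] by (simp add: transpose_mult_self)

lemma mult_vec_transpose_cancel: "x \<in> carrier_vec n \<Longrightarrow> Q *\<^sub>v (Q\<^sup>T *\<^sub>v x) = x"
  using assoc_mult_mat_vec[OF carrier carrier_transpose] by (simp add: mult_transpose_self)

lemma scalar_prod_mult_vec:
  assumes "x \<in> carrier_vec n" "y \<in> carrier_vec n"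
  shows "(Q *\<^sub>v x) \<bullet> (Q *\<^sub>v y) = x \<bullet> y"
  using transpose_vec_mult_scalar[OF carrier assms(2) mult_mat_vec_carrier[OF carrier assms(1)]] assms
  by (simp add: transpose_mult_vec_cancel)

lemma scalar_prod_transpose_mult_vec:
  assumes "x \<in> carrier_vec n" "y \<in> carrier_vec n"
  shows "(Q\<^sup>T *\<^sub>v x) \<bullet> (Q\<^sup>T *\<^sub>v y) = x \<bullet> y"
  using transpose_vec_mult_scalar[OF carrier_transpose assms(2) mult_mat_vec_carrier[OF carrier_transpose assms(1)]] assms
  by (simp add: mult_vec_transpose_cancel)

end

lemma real_orthogonal_mult:
  assumes "real_orthogonal n A" "real_orthogonal n B"
  shows "real_orthogonal n (A * B)"
proof
  note A = real_orthogonal.carrier[OF assms(1)] and B = real_orthogonal.carrier[OF assms(2)]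
  show "A * B \<in> carrier_mat n n" using A B by simp
  have "(A * B)\<^sup>T * (A * B) = B\<^sup>T * ((A\<^sup>T * A) * B)"
    using A B by (simp add: transpose_mult[OF A B] assoc_mult_mat[of _ n n _ n _ n])
  also have "\<dots> = 1\<^sub>m n"
    using B real_orthogonal.transpose_mult_self[OF assms(1)] real_orthogonal.transpose_mult_self[OF assms(2)]
    by simp
  finally show "(A * B)\<^sup>T * (A * B) = 1\<^sub>m n" .
qed

lemma real_vec_self_scalar_prod_pos:
  fixes v :: "real vec"
  assumes "v \<in> carrier_vec n" "v \<noteq> 0\<^sub>v n"
  shows "0 < v \<bullet> v"
  using conjugate_square_greater_0_vec[OF assms(1)] assms(2)
  by (metis scalar_prod_def vec_conjugate_real)

definition reflection_mat :: "nat \<Rightarrow> real vec \<Rightarrow> real mat" where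
  "reflection_mat n w = mat n n (\<lambda>(i,j). of_bool (i = j) - 2 / (w \<bullet> w) * w $ i * w $ j)"

lemma reflection_mat_orthogonal:
  assumes w: "w \<in> carrier_vec n" "w \<noteq> 0\<^sub>v n"
  shows "real_orthogonal n (reflection_mat n w)"
proof
  define c where "c = 2 / (w \<bullet> w)"
  have cww: "c * (w \<bullet> w) = 2" unfolding c_def using real_vec_self_scalar_prod_pos[OF w] by simp
  let ?H = "reflection_mat n w"
  show H: "?H \<in> carrier_mat n n" unfolding reflection_mat_def by simp
  have "?H\<^sup>T = ?H" unfolding reflection_mat_def by (rule eq_matI) auto
  moreover have "?H * ?H = 1\<^sub>m n"
  proof (rule eq_matI)
    fix i j assume "i < dim_row (1\<^sub>m n)" "j < dim_col (1\<^sub>m n)"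
    then have ij: "i < n" "j < n" by auto
    have delta: "of_bool P * x = (if P then x else 0)" for P and x :: real by simp
    have "(?H * ?H) $$ (i, j) = (\<Sum>k<n. (of_bool (i = k) - c * w$i * w$k) * (of_bool (k = j) - c * w$k * w$j))"
      using ij unfolding reflection_mat_def c_def by (simp add: scalar_prod_def lessThan_atLeast0)
    also have "\<dots> = (\<Sum>k<n. of_bool (i = k) * of_bool (k = j)) - (\<Sum>k<n. of_bool (i = k) * (c * w$k * w$j))
       - (\<Sum>k<n. of_bool (k = j) * (c * w$i * w$k)) + c * c * w$i * w$j * (\<Sum>k<n. w$k * w$k)"
      by (simp add: algebra_simps sum.distrib sum_subtractf sum_distrib_left)
    also have "\<dots> = of_bool (i = j) - 2 * c * w$i * w$j + c * c * w$i * w$j * (w \<bullet> w)"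
      using ij w by (simp only: delta) (simp add: scalar_prod_def lessThan_atLeast0)
    also have "\<dots> = of_bool (i = j)" using cww by (simp add: algebra_simps)
    finally show "(?H * ?H) $$ (i, j) = 1\<^sub>m n $$ (i, j)" using ij by simp
  qed (auto simp: reflection_mat_def)
  ultimately show "?H\<^sup>T * ?H = 1\<^sub>m n" by simp
qed

lemma householder_reflection:
  fixes u :: "real vec"
  assumes u: "u \<in> carrier_vec n" and uu: "u \<bullet> u = 1"
  shows "\<exists>H. real_orthogonal n H \<and> H *\<^sub>v unit_vec n 0 = u"
proof (cases "u = unit_vec n 0")
  case True
  show ?thesis
    by (rule exI[of _ "1\<^sub>m n"]) (auto simp: real_orthogonal_def True)
next
  case False
  have n: "0 < n"
    using uu u by (cases n) (auto simp: scalar_prod_def)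
  define w where "w = unit_vec n 0 - u"
  have w: "w \<in> carrier_vec n" unfolding w_def using u by simp
  have "w \<noteq> 0\<^sub>v n"
  proof
    assume w0: "w = 0\<^sub>v n"
    have "u = unit_vec n 0"
    proof (rule eq_vecI)
      fix i assume "i < dim_vec (unit_vec n 0)"
      then show "u $ i = unit_vec n 0 $ i"
        using arg_cong[OF w0, of "\<lambda>v. v $ i"] u unfolding w_def by simp
    qed (use u in simp)
    with False show False ..
  qed
  \<comment> \<open>Since u is a unit vector, w \<bullet> w = 2 w$0, so the reflection maps the first unit vector to u.\<close>
  have "w \<bullet> w = unit_vec n 0 \<bullet> unit_vec n 0 - 2 * (u $ 0) + u \<bullet> u"
    unfolding w_def using u n
    by (simp add: minus_scalar_prod_distrib[of _ n] scalar_prod_minus_distrib[of _ n]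
        comm_scalar_prod[of u n "unit_vec n 0"])
  then have ww: "w \<bullet> w = 2 * w $ 0" using uu u n unfolding w_def by simp
  have "reflection_mat n w *\<^sub>v unit_vec n 0 = u"
  proof (rule eq_vecI)
    fix i assume "i < dim_vec u"
    then have i: "i < n" using u by simp
    have "(reflection_mat n w *\<^sub>v unit_vec n 0) $ i = of_bool (i = 0) - 2 * w $ 0 / (w \<bullet> w) * w $ i"
      using i n unfolding reflection_mat_def by (simp add: mult.commute mult.left_commute)
    also have "\<dots> = u $ i"
      using i u ww real_vec_self_scalar_prod_pos[OF w \<open>w \<noteq> 0\<^sub>v n\<close>] unfolding w_def
      by (simp add: unit_vec_def)
    finally show "(reflection_mat n w *\<^sub>v unit_vec n 0) $ i = u $ i" .
  qed (use u in \<open>simp add: reflection_mat_def\<close>)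
  then show ?thesis using reflection_mat_orthogonal[OF w \<open>w \<noteq> 0\<^sub>v n\<close>] by blast
qed

lemma real_symmetric_mat_complex_eigenvalue_real:
  fixes A :: "real mat"
  assumes A: "A \<in> carrier_mat n n" and sym: "A\<^sup>T = A"
    and ev: "eigenvector (map_mat complex_of_real A) v z"
  shows "cnj z = z"
proof -
  let ?Ac = "map_mat complex_of_real A"
  have v: "v \<in> carrier_vec n" "v \<noteq> 0\<^sub>v n" and Av: "?Ac *\<^sub>v v = z \<cdot>\<^sub>v v"
    using ev A unfolding eigenvector_def by auto
  define N where "N = (\<Sum>i<n. cnj (v$i) * v$i)"
  define s where "s = (\<Sum>i<n. \<Sum>j<n. cnj (v$i) * complex_of_real (A$$(i,j)) * v$j)"
  have s_eq: "s = z * N"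
  proof -
    have "s = (\<Sum>i<n. cnj (v$i) * (?Ac *\<^sub>v v)$i)"
      unfolding s_def using A v
      by (intro sum.cong) (auto simp: scalar_prod_def sum_distrib_left lessThan_atLeast0 mult.assoc)
    also have "\<dots> = z * N" unfolding Av N_def using v
      by (auto simp: sum_distrib_left intro!: sum.cong)
    finally show ?thesis .
  qed
  have "cnj s = (\<Sum>i<n. \<Sum>j<n. v$i * complex_of_real (A$$(i,j)) * cnj (v$j))"
    unfolding s_def by (simp add: cnj_sum)
  also have "\<dots> = (\<Sum>j<n. \<Sum>i<n. v$i * complex_of_real (A$$(i,j)) * cnj (v$j))"
    by (rule sum.swap)
  also have "\<dots> = s"
  proof -
    have "A $$ (j, i) = A $$ (i, j)" if "i < n" "j < n" for i j
      using A that arg_cong[OF sym, of "\<lambda>M. M $$ (i, j)"] by auto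
    then show ?thesis unfolding s_def by (intro sum.cong refl) (auto simp: mult.commute)
  qed
  finally have s_real: "cnj s = s" .
  obtain i where i: "i < n" "v $ i \<noteq> 0" using v by (metis carrier_vecD eq_vecI index_zero_vec)
  have N_pos: "0 < (\<Sum>i<n. (cmod (v$i))\<^sup>2)"
    using i by (intro sum_pos2[of _ i]) auto
  have N_eq: "N = complex_of_real (\<Sum>i<n. (cmod (v$i))\<^sup>2)"
    unfolding N_def of_real_sum
    by (intro sum.cong) (auto simp: complex_norm_square mult.commute simp del: of_real_power)
  have "cnj z * N = z * N" using s_eq s_real N_eq by (metis complex_cnj_complex_of_real complex_cnj_mult)
  moreover have "N \<noteq> 0" using N_pos unfolding N_eq of_real_eq_0_iff by linarith
  ultimately show ?thesis by simp
qed

lemma real_symmetric_mat_has_eigenvalue: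
  fixes A :: "real mat"
  assumes A: "A \<in> carrier_mat n n" and sym: "A\<^sup>T = A" and n: "0 < n"
  shows "\<exists>e. eigenvalue A e"
proof -
  let ?Ac = "map_mat complex_of_real A"
  have Ac: "?Ac \<in> carrier_mat n n" using A by simp
  obtain as where cp: "char_poly ?Ac = (\<Prod>a\<leftarrow>as. [:-a, 1:])" "length as = n"
    using char_poly_factorized[OF Ac] by auto
  then obtain z where "z \<in> set as" using n by (cases as) auto
  then have root: "poly (char_poly ?Ac) z = 0" unfolding cp(1) by (rule linear_poly_root)
  then obtain v where "eigenvector ?Ac v z"
    using eigenvalue_root_char_poly[OF Ac] unfolding eigenvalue_def by auto
  then have "cnj z = z" by (rule real_symmetric_mat_complex_eigenvalue_real[OF A sym])
  then have "z = complex_of_real (Re z)" by (metis Reals_cnj_iff complex_is_Real_iff of_real_Re)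
  with root have "poly (char_poly ?Ac) (complex_of_real (Re z)) = 0" by simp
  then have "complex_of_real (poly (char_poly A) (Re z)) = 0"
    unfolding of_real_hom.char_poly_hom[OF A] of_real_hom.poly_map_poly .
  then show ?thesis using eigenvalue_root_char_poly[OF A] by auto
qed

lemma real_symmetric_mat_unit_eigenvector:
  fixes A :: "real mat"
  assumes A: "A \<in> carrier_mat n n" and sym: "A\<^sup>T = A" and n: "0 < n"
  obtains u e where "u \<in> carrier_vec n" "u \<bullet> u = 1" "A *\<^sub>v u = e \<cdot>\<^sub>v u"
proof -
  obtain e v where "eigenvector A v e"
    using real_symmetric_mat_has_eigenvalue[OF A sym n] unfolding eigenvalue_def by auto
  then have v: "v \<in> carrier_vec n" "v \<noteq> 0\<^sub>v n" and Av: "A *\<^sub>v v = e \<cdot>\<^sub>v v"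
    using A unfolding eigenvector_def by auto
  define u where "u = (1 / sqrt (v \<bullet> v)) \<cdot>\<^sub>v v"
  have "u \<in> carrier_vec n" unfolding u_def using v by simp
  moreover have "u \<bullet> u = 1"
    unfolding u_def using v real_vec_self_scalar_prod_pos[OF v]
    by (simp add: smult_scalar_prod_distrib[of _ n] scalar_prod_smult_distrib[of _ n])
  moreover have "A *\<^sub>v u = e \<cdot>\<^sub>v u" unfolding u_def using v A Av
    by (simp add: mult_mat_vec[of _ n n] smult_smult_assoc mult.commute)
  ultimately show thesis by (rule that)
qed

lemma symmetric_mat_eigen_unit_vec_block:
  fixes A :: "real mat"
  assumes A: "A \<in> carrier_mat (Suc m) (Suc m)" and sym: "A\<^sup>T = A"
    and Ae: "A *\<^sub>v unit_vec (Suc m) 0 = e \<cdot>\<^sub>v unit_vec (Suc m) 0"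
  defines "A' \<equiv> mat m m (\<lambda>(i,j). A $$ (Suc i, Suc j))"
  shows "A = four_block_mat (mat 1 1 (\<lambda>_. e)) (0\<^sub>m 1 m) (0\<^sub>m m 1) A'" and "A'\<^sup>T = A'"
proof -
  have entry_sym: "A $$ (j, i) = A $$ (i, j)" if "i < Suc m" "j < Suc m" for i j
    using arg_cong[OF sym, of "\<lambda>M. M $$ (i, j)"] A that by simp
  have col0: "A $$ (i, 0) = (if i = 0 then e else 0)" if "i < Suc m" for i
    using arg_cong[OF Ae, of "\<lambda>x. x $ i"] A that by simp
  have A': "A' \<in> carrier_mat m m" unfolding A'_def by simp
  show "A = four_block_mat (mat 1 1 (\<lambda>_. e)) (0\<^sub>m 1 m) (0\<^sub>m m 1) A'"
  proof (rule eq_matI)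
    fix i j assume "i < dim_row (four_block_mat (mat 1 1 (\<lambda>_. e)) (0\<^sub>m 1 m) (0\<^sub>m m 1) A')"
      "j < dim_col (four_block_mat (mat 1 1 (\<lambda>_. e)) (0\<^sub>m 1 m) (0\<^sub>m m 1) A')"
    then have ij: "i < Suc m" "j < Suc m" using A' by auto
    show "A $$ (i, j) = four_block_mat (mat 1 1 (\<lambda>_. e)) (0\<^sub>m 1 m) (0\<^sub>m m 1) A' $$ (i, j)"
      using ij A' col0[OF ij(1)] col0[OF ij(2)] entry_sym[OF ij]
      by (cases i; cases j) (auto simp: A'_def)
  qed (use A A' in auto)
  show "A'\<^sup>T = A'" unfolding A'_def by (intro eq_matI) (auto simp: entry_sym)
qed

lemma real_orthogonal_one_block:
  assumes Q: "real_orthogonal m Q"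
  shows "real_orthogonal (Suc m) (four_block_mat (1\<^sub>m 1) (0\<^sub>m 1 m) (0\<^sub>m m 1) Q)"
proof
  have Qc: "Q \<in> carrier_mat m m" by (rule real_orthogonal.carrier[OF Q])
  show "four_block_mat (1\<^sub>m 1) (0\<^sub>m 1 m) (0\<^sub>m m 1) Q \<in> carrier_mat (Suc m) (Suc m)"
    using four_block_carrier_mat[OF one_carrier_mat[of 1] Qc] by simp
  show "(four_block_mat (1\<^sub>m 1) (0\<^sub>m 1 m) (0\<^sub>m m 1) Q)\<^sup>T * four_block_mat (1\<^sub>m 1) (0\<^sub>m 1 m) (0\<^sub>m m 1) Q
      = 1\<^sub>m (Suc m)"
    using Qc real_orthogonal.transpose_mult_self[OF Q]
    by (simp add: transpose_four_block_mat[of _ 1 1 _ m _ m], subst mult_four_block_mat) auto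
qed

theorem real_symmetric_mat_orthogonal_diagonalization:
  fixes A :: "real mat"
  assumes "A \<in> carrier_mat n n" and "A\<^sup>T = A"
  shows "\<exists>Q f. real_orthogonal n Q \<and> Q\<^sup>T * A * Q = mat_diag n f"
  using assms
proof (induction n arbitrary: A)
  case 0
  then show ?case
    by (intro exI[of _ "1\<^sub>m 0"] exI[of _ "\<lambda>_. 0"]) (auto intro!: eq_matI simp: real_orthogonal_def mat_diag_def)
next
  case (Suc m A)
  let ?n = "Suc m"
  have A: "A \<in> carrier_mat ?n ?n" and sym: "A\<^sup>T = A" by fact+
  obtain u e where u: "u \<in> carrier_vec ?n" "u \<bullet> u = 1" and Au: "A *\<^sub>v u = e \<cdot>\<^sub>v u"
    using real_symmetric_mat_unit_eigenvector[OF A sym] by blast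
  obtain H where H: "real_orthogonal ?n H" and He: "H *\<^sub>v unit_vec ?n 0 = u"
    using householder_reflection[OF u] by blast
  have Hc: "H \<in> carrier_mat ?n ?n" and HT: "H\<^sup>T \<in> carrier_mat ?n ?n"
    using real_orthogonal.carrier[OF H] by auto
  define A1 where "A1 = H\<^sup>T * A * H"
  have A1: "A1 \<in> carrier_mat ?n ?n" unfolding A1_def using Hc A by simp
  have A1_sym: "A1\<^sup>T = A1"
    unfolding A1_def using Hc A sym
    by (simp add: transpose_mult[of _ ?n ?n _ ?n] assoc_mult_mat[of _ ?n ?n _ ?n _ ?n])
  have "A1 *\<^sub>v unit_vec ?n 0 = H\<^sup>T *\<^sub>v (A *\<^sub>v u)"
    unfolding A1_def He[symmetric] using Hc HT A by (simp add: assoc_mult_mat_vec[of _ ?n ?n _ ?n])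
  also have "\<dots> = e \<cdot>\<^sub>v (H\<^sup>T *\<^sub>v (H *\<^sub>v unit_vec ?n 0))"
    unfolding Au He using HT u by (simp add: mult_mat_vec)
  finally have A1e: "A1 *\<^sub>v unit_vec ?n 0 = e \<cdot>\<^sub>v unit_vec ?n 0"
    by (simp add: real_orthogonal.transpose_mult_vec_cancel[OF H])
  define A2 where "A2 = mat m m (\<lambda>(i,j). A1 $$ (Suc i, Suc j))"
  have A1_block: "A1 = four_block_mat (mat 1 1 (\<lambda>_. e)) (0\<^sub>m 1 m) (0\<^sub>m m 1) A2" and "A2\<^sup>T = A2"
    using symmetric_mat_eigen_unit_vec_block[OF A1 A1_sym A1e] unfolding A2_def by auto
  obtain Q2 f2 where Q2: "real_orthogonal m Q2" and Q2d: "Q2\<^sup>T * A2 * Q2 = mat_diag m f2"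
    using Suc.IH[OF _ \<open>A2\<^sup>T = A2\<close>] unfolding A2_def by auto
  have Q2c: "Q2 \<in> carrier_mat m m" and A2: "A2 \<in> carrier_mat m m"
    using real_orthogonal.carrier[OF Q2] unfolding A2_def by auto
  define P where "P = four_block_mat (1\<^sub>m 1) (0\<^sub>m 1 m) (0\<^sub>m m 1) Q2"
  have P: "real_orthogonal ?n P" unfolding P_def by (rule real_orthogonal_one_block[OF Q2])
  have Pc: "P \<in> carrier_mat ?n ?n" by (rule real_orthogonal.carrier[OF P])
  have "P\<^sup>T * A1 * P = four_block_mat (mat 1 1 (\<lambda>_. e)) (0\<^sub>m 1 m) (0\<^sub>m m 1) (Q2\<^sup>T * A2 * Q2)"
    unfolding P_def A1_block using Q2c A2
    by (simp add: transpose_four_block_mat[of _ 1 1 _ m _ m], (subst mult_four_block_mat, auto)+)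
  also have "\<dots> = mat_diag ?n (\<lambda>i. if i = 0 then e else f2 (i - 1))"
    unfolding Q2d by (rule eq_matI) (auto simp: mat_diag_def)
  finally have PA1P: "P\<^sup>T * A1 * P = mat_diag ?n (\<lambda>i. if i = 0 then e else f2 (i - 1))" .
  have "(H * P)\<^sup>T * A * (H * P) = P\<^sup>T * A1 * P"
    unfolding A1_def using Hc Pc A
    by (simp add: transpose_mult[of _ ?n ?n _ ?n] assoc_mult_mat[of _ ?n ?n _ ?n _ ?n])
  then show ?case using real_orthogonal_mult[OF H P] PA1P by metis
qed

section \<open>Matrices diagonalised by a fixed orthogonal matrix\<close>

lemma mat_diag_mult_vec:
  assumes "x \<in> carrier_vec n"
  shows "mat_diag n f *\<^sub>v x = vec n (\<lambda>i. f i * x $ i)"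
proof (rule eq_vecI)
  fix i assume "i < dim_vec (vec n (\<lambda>i. f i * x $ i))"
  then have i: "i < n" by simp
  have "(mat_diag n f *\<^sub>v x) $ i = (\<Sum>k<n. (if i = k then f k else 0) * x $ k)"
    using i assms by (simp add: mat_diag_def scalar_prod_def lessThan_atLeast0)
  also have "\<dots> = f i * x $ i"
    using i by (simp add: if_distrib[of "\<lambda>a. a * _"] cong: if_cong)
  finally show "(mat_diag n f *\<^sub>v x) $ i = vec n (\<lambda>i. f i * x $ i) $ i" using i by simp
qed (simp add: mat_diag_def)

lemma mat_trace_mult_comm:
  assumes "A \<in> carrier_mat n m" "B \<in> carrier_mat m n"
  shows "mat_trace (A * B) = mat_trace (B * A)"
proof -
  have "mat_trace (A * B) = (\<Sum>i<n. \<Sum>k<m. A $$ (i,k) * B $$ (k,i))"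
    unfolding mat_trace_def using assms
    by (auto simp: scalar_prod_def lessThan_atLeast0 intro!: sum.cong)
  also have "\<dots> = (\<Sum>k<m. \<Sum>i<n. B $$ (k,i) * A $$ (i,k))"
    by (subst sum.swap) (simp add: mult.commute)
  also have "\<dots> = mat_trace (B * A)"
    unfolding mat_trace_def using assms
    by (auto simp: scalar_prod_def lessThan_atLeast0 intro!: sum.cong)
  finally show ?thesis .
qed

lemma rank_mat_sum_le_card:
  fixes g :: "nat \<Rightarrow> nat \<Rightarrow> nat \<Rightarrow> real"
  assumes "finite K"
    and rank1: "\<And>k. vec_space.rank n (mat n n (\<lambda>(r,c). g k r c)) \<le> 1"
  shows "vec_space.rank n (mat n n (\<lambda>(r,c). \<Sum>k\<in>K. g k r c)) \<le> card K"
  using assms(1)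
proof (induction K rule: finite_induct)
  case empty
  have "mat n n (\<lambda>(r,c). \<Sum>k\<in>{}. g k r c) = 0\<^sub>m n n" by (rule eq_matI) auto
  then show ?case using vec_space.rank_0I[of n n] by (simp only:) simp
next
  case (insert k K)
  have "mat n n (\<lambda>(r,c). \<Sum>k\<in>insert k K. g k r c)
      = mat n n (\<lambda>(r,c). g k r c) + mat n n (\<lambda>(r,c). \<Sum>k\<in>K. g k r c)"
    by (rule eq_matI) (use insert in auto)
  then have "vec_space.rank n (mat n n (\<lambda>(r,c). \<Sum>k\<in>insert k K. g k r c))
      \<le> vec_space.rank n (mat n n (\<lambda>(r,c). g k r c)) + vec_space.rank n (mat n n (\<lambda>(r,c). \<Sum>k\<in>K. g k r c))"
    using vec_space.rank_subadditive[of "mat n n (\<lambda>(r,c). g k r c)" n n] by simp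
  also have "\<dots> \<le> 1 + card K" using rank1[of k] insert.IH by linarith
  finally show ?case using insert by simp
qed

lemma sum_mult_unit_vec_square:
  assumes "i < n"
  shows "(\<Sum>j<n. g j * (unit_vec n i $ j)\<^sup>2) = (g i :: real)"
proof -
  have "(\<Sum>j<n. g j * (unit_vec n i $ j)\<^sup>2) = (\<Sum>j<n. if j = i then g i else 0)"
    by (rule sum.cong) (auto simp: unit_vec_def)
  also have "\<dots> = g i" using assms by simp
  finally show ?thesis .
qed

lemma psd_add:
  assumes "psd A" "psd B" "A \<in> carrier_mat n n" "B \<in> carrier_mat n n"
  shows "psd (A + B)"
proof -
  have "x \<bullet> ((A + B) *\<^sub>v x) = x \<bullet> (A *\<^sub>v x) + x \<bullet> (B *\<^sub>v x)" if "x \<in> carrier_vec n" for x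
    using assms that by (simp add: add_mult_distrib_mat_vec[of _ n n] scalar_prod_add_distrib[of _ n])
  then show ?thesis using assms unfolding psd_def by (auto simp: transpose_add[of _ n n])
qed

lemma card_above_threshold_le:
  fixes l :: "nat \<Rightarrow> real"
  assumes "finite A" "0 \<le> \<tau>"
  shows "real (card {i \<in> A. \<tau> < l i}) * \<tau>\<^sup>2 \<le> (\<Sum>i\<in>A. (l i)\<^sup>2)"
proof -
  have "real (card {i \<in> A. \<tau> < l i}) * \<tau>\<^sup>2 = (\<Sum>i\<in>{i \<in> A. \<tau> < l i}. \<tau>\<^sup>2)" by simp
  also have "\<dots> \<le> (\<Sum>i\<in>{i \<in> A. \<tau> < l i}. (l i)\<^sup>2)"
    using assms(2) by (intro sum_mono power_mono) auto
  also have "\<dots> \<le> (\<Sum>i\<in>A. (l i)\<^sup>2)"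
    using assms(1) by (intro sum_mono2) auto
  finally show ?thesis .
qed

lemma sum_above_threshold_le:
  fixes l :: "nat \<Rightarrow> real"
  assumes "0 < \<tau>"
  shows "(\<Sum>i\<in>A. if \<tau> < l i then l i else 0) \<le> (\<Sum>i\<in>A. (l i)\<^sup>2) / \<tau>"
  unfolding sum_divide_distrib
proof (rule sum_mono)
  fix i
  show "(if \<tau> < l i then l i else 0) \<le> (l i)\<^sup>2 / \<tau>"
  proof (cases "\<tau> < l i")
    case True
    then have "l i * \<tau> \<le> (l i)\<^sup>2" using assms by (simp add: power2_eq_square mult_left_mono)
    then show ?thesis using True assms by (simp add: field_simps)
  qed (use assms in auto)
qed

context real_orthogonal
begin

definition diag_conj :: "(nat \<Rightarrow> real) \<Rightarrow> real mat" where
  "diag_conj f = Q * mat_diag n f * Q\<^sup>T"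

lemmas carrier_simps = carrier carrier_transpose mult_carrier_mat[of _ n n _ n]

lemma diag_conj_carrier [simp]: "diag_conj f \<in> carrier_mat n n"
  unfolding diag_conj_def by (simp add: carrier_simps)

lemma dim_diag_conj [simp]: "dim_row (diag_conj f) = n" "dim_col (diag_conj f) = n"
  using carrier_matD[OF diag_conj_carrier[of f]] by auto

lemma diag_conj_one: "diag_conj (\<lambda>_. 1) = 1\<^sub>m n"
  unfolding diag_conj_def using carrier by (simp add: mult_transpose_self)

lemma diag_conj_add: "diag_conj f + diag_conj g = diag_conj (\<lambda>i. f i + g i)"
proof -
  have "diag_conj f + diag_conj g = Q * (mat_diag n f + mat_diag n g) * Q\<^sup>T"
    unfolding diag_conj_def
    by (simp add: carrier_simps add_mult_distrib_mat[of _ n n _ _ n] mult_add_distrib_mat[of _ n n _ n])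
  also have "mat_diag n f + mat_diag n g = mat_diag n (\<lambda>i. f i + g i)"
    by (rule eq_matI) (auto simp: mat_diag_def)
  finally show ?thesis unfolding diag_conj_def .
qed

lemma diag_conj_mult: "diag_conj f * diag_conj g = diag_conj (\<lambda>i. f i * g i)"
proof -
  have "diag_conj f * diag_conj g = Q * (mat_diag n f * ((Q\<^sup>T * Q) * mat_diag n g)) * Q\<^sup>T"
    unfolding diag_conj_def by (simp add: carrier_simps assoc_mult_mat[of _ n n _ n _ n])
  then show ?thesis
    unfolding diag_conj_def transpose_mult_self by (simp add: left_mult_one_mat[OF mat_diag_dim])
qed

lemma mat_trace_diag_conj: "mat_trace (diag_conj f) = (\<Sum>i<n. f i)"
proof -
  have "mat_trace (diag_conj f) = mat_trace (Q\<^sup>T * (Q * mat_diag n f))"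
    unfolding diag_conj_def using carrier by (intro mat_trace_mult_comm[of _ n n]) auto
  also have "Q\<^sup>T * (Q * mat_diag n f) = mat_diag n f"
    by (simp add: carrier_simps assoc_mult_mat[of _ n n _ n _ n, symmetric] transpose_mult_self
        left_mult_one_mat[OF mat_diag_dim])
  finally show ?thesis by (simp add: mat_trace_def mat_diag_def)
qed

lemma diag_conj_mult_vec:
  assumes "x \<in> carrier_vec n"
  shows "diag_conj f *\<^sub>v x = Q *\<^sub>v vec n (\<lambda>i. f i * (Q\<^sup>T *\<^sub>v x) $ i)"
  unfolding diag_conj_def using assms carrier
  by (simp add: assoc_mult_mat_vec[of _ n n _ n] mat_diag_mult_vec[of _ n])

lemma scalar_prod_diag_conj_mult_vec:
  assumes "x \<in> carrier_vec n" "y \<in> carrier_vec n"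
  shows "(diag_conj f *\<^sub>v x) \<bullet> (diag_conj g *\<^sub>v y)
    = (\<Sum>i<n. f i * g i * (Q\<^sup>T *\<^sub>v x) $ i * (Q\<^sup>T *\<^sub>v y) $ i)"
  unfolding diag_conj_mult_vec[OF assms(1)] diag_conj_mult_vec[OF assms(2)]
  by (subst scalar_prod_mult_vec) (auto simp: scalar_prod_def lessThan_atLeast0 ac_simps)

lemma quadratic_form_diag_conj:
  assumes "x \<in> carrier_vec n"
  shows "x \<bullet> (diag_conj f *\<^sub>v x) = (\<Sum>i<n. f i * ((Q\<^sup>T *\<^sub>v x) $ i)\<^sup>2)"
  using scalar_prod_diag_conj_mult_vec[OF assms assms, of "\<lambda>_. 1" f] assms
  by (simp add: diag_conj_one power2_eq_square ac_simps)

lemma psd_diag_conj: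
  assumes "\<And>i. i < n \<Longrightarrow> 0 \<le> f i"
  shows "psd (diag_conj f)"
proof -
  have "(mat_diag n f)\<^sup>T = mat_diag n f"
    by (rule eq_matI) (auto simp: mat_diag_def)
  then have "(diag_conj f)\<^sup>T = diag_conj f"
    unfolding diag_conj_def
    by (simp add: carrier_simps transpose_mult[of _ n n _ n] assoc_mult_mat[of _ n n _ n _ n])
  moreover have "0 \<le> x \<bullet> (diag_conj f *\<^sub>v x)" if "x \<in> carrier_vec n" for x
    unfolding quadratic_form_diag_conj[OF that] using assms by (intro sum_nonneg) auto
  ultimately show ?thesis unfolding psd_def using carrier_matD[OF diag_conj_carrier] by auto
qed

lemma norm_square_diag_conj_mult_vec:
  assumes "x \<in> carrier_vec n"
  shows "(diag_conj f *\<^sub>v x) \<bullet> (diag_conj f *\<^sub>v x) = (\<Sum>i<n. (f i)\<^sup>2 * ((Q\<^sup>T *\<^sub>v x) $ i)\<^sup>2)"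
  by (simp add: scalar_prod_diag_conj_mult_vec[OF assms assms] power2_eq_square ac_simps)

lemma rank_diag_conj: "vec_space.rank n (diag_conj f) \<le> card {k. k < n \<and> f k \<noteq> 0}"
proof -
  let ?K = "{k. k < n \<and> f k \<noteq> 0}"
  have "diag_conj f = mat n n (\<lambda>(r,c). \<Sum>k\<in>?K. Q $$ (r,k) * f k * Q $$ (c,k))"
  proof (rule eq_matI)
    fix r c assume "r < dim_row (mat n n (\<lambda>(r,c). \<Sum>k\<in>?K. Q $$ (r,k) * f k * Q $$ (c,k)))"
      "c < dim_col (mat n n (\<lambda>(r,c). \<Sum>k\<in>?K. Q $$ (r,k) * f k * Q $$ (c,k)))"
    then have rc: "r < n" "c < n" by auto
    have "diag_conj f $$ (r,c) = (\<Sum>k<n. Q $$ (r,k) * f k * Q $$ (c,k))"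
      unfolding diag_conj_def using rc carrier
      by (simp add: mat_diag_mult_right[of _ n n] scalar_prod_def lessThan_atLeast0)
    also have "\<dots> = (\<Sum>k\<in>?K. Q $$ (r,k) * f k * Q $$ (c,k))"
      by (rule sum.mono_neutral_right) auto
    finally show "diag_conj f $$ (r,c) = mat n n (\<lambda>(r,c). \<Sum>k\<in>?K. Q $$ (r,k) * f k * Q $$ (c,k)) $$ (r,c)"
      using rc by simp
  qed auto
  also have "vec_space.rank n \<dots> \<le> card ?K"
  proof (rule rank_mat_sum_le_card)
    fix k
    show "vec_space.rank n (mat n n (\<lambda>(r,c). Q $$ (r,k) * f k * Q $$ (c,k))) \<le> 1"
      by (rule vec_space.rank_le_1_product_entries[of _ n n "\<lambda>r. Q $$ (r,k) * f k" "\<lambda>c. Q $$ (c,k)"]) auto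
  qed auto
  finally show ?thesis .
qed

lemma norm_diag_conj_mult_vec_le:
  assumes x: "x \<in> carrier_vec n" "x \<bullet> x \<le> 1" and f: "\<And>i. i < n \<Longrightarrow> \<bar>f i\<bar> \<le> c"
  shows "(diag_conj f *\<^sub>v x) \<bullet> (diag_conj f *\<^sub>v x) \<le> c\<^sup>2"
proof -
  define y where "y = Q\<^sup>T *\<^sub>v x"
  have y: "y \<in> carrier_vec n" unfolding y_def using x carrier_transpose by simp
  have "(diag_conj f *\<^sub>v x) \<bullet> (diag_conj f *\<^sub>v x) = (\<Sum>i<n. (f i)\<^sup>2 * (y $ i)\<^sup>2)"
    unfolding y_def by (rule norm_square_diag_conj_mult_vec[OF x(1)])
  also have "\<dots> \<le> (\<Sum>i<n. c\<^sup>2 * (y $ i)\<^sup>2)"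
  proof (intro sum_mono mult_right_mono)
    fix i assume "i \<in> {..<n}"
    then show "(f i)\<^sup>2 \<le> c\<^sup>2" using power_mono[OF f abs_ge_zero, of i 2] by simp
  qed simp
  also have "\<dots> = c\<^sup>2 * (y \<bullet> y)"
    using y by (simp add: scalar_prod_def sum_distrib_left lessThan_atLeast0 power2_eq_square)
  also have "y \<bullet> y = x \<bullet> x" unfolding y_def by (rule scalar_prod_transpose_mult_vec[OF x(1) x(1)])
  also have "c\<^sup>2 * (x \<bullet> x) \<le> c\<^sup>2" using x(2) by (simp add: mult_left_le)
  finally show ?thesis .
qed

lemma op_norm_diag_conj_bound:
  assumes "0 \<le> c" and "\<And>i. i < n \<Longrightarrow> \<bar>f i\<bar> \<le> c"
    and "s \<in> {sqrt ((diag_conj f *\<^sub>v x) \<bullet> (diag_conj f *\<^sub>v x)) |x.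
      x \<in> carrier_vec (dim_col (diag_conj f)) \<and> x \<bullet> x \<le> 1}"
  shows "s \<le> c"
proof -
  obtain x where x: "x \<in> carrier_vec n" "x \<bullet> x \<le> 1"
    and s: "s = sqrt ((diag_conj f *\<^sub>v x) \<bullet> (diag_conj f *\<^sub>v x))"
    using assms(3) by fastforce
  have "s \<le> sqrt (c\<^sup>2)"
    unfolding s by (rule real_sqrt_le_mono[OF norm_diag_conj_mult_vec_le[OF x assms(2)]])
  then show "s \<le> c" using assms(1) by simp
qed

lemma op_norm_diag_conj_le:
  assumes "0 \<le> c" and "\<And>i. i < n \<Longrightarrow> \<bar>f i\<bar> \<le> c"
  shows "op_norm (diag_conj f) \<le> c"
  unfolding op_norm_def
proof (rule cSup_least)
  have "sqrt ((diag_conj f *\<^sub>v 0\<^sub>v n) \<bullet> (diag_conj f *\<^sub>v 0\<^sub>v n))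
    \<in> {sqrt ((diag_conj f *\<^sub>v x) \<bullet> (diag_conj f *\<^sub>v x)) |x.
      x \<in> carrier_vec (dim_col (diag_conj f)) \<and> x \<bullet> x \<le> 1}"
    by (intro CollectI exI[of _ "0\<^sub>v n"]) simp
  then show "{sqrt ((diag_conj f *\<^sub>v x) \<bullet> (diag_conj f *\<^sub>v x)) |x.
      x \<in> carrier_vec (dim_col (diag_conj f)) \<and> x \<bullet> x \<le> 1} \<noteq> {}"
    by (metis empty_iff)
qed (rule op_norm_diag_conj_bound[OF assms])

lemma op_norm_diag_conj_ge:
  assumes i: "i < n"
  shows "\<bar>f i\<bar> \<le> op_norm (diag_conj f)"
  unfolding op_norm_def
proof (rule cSup_upper)
  let ?x = "Q *\<^sub>v unit_vec n i"
  have x: "?x \<in> carrier_vec n" using carrier by simp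
  have "?x \<bullet> ?x = 1" using scalar_prod_mult_vec[of "unit_vec n i" "unit_vec n i"] i by simp
  moreover have "(diag_conj f *\<^sub>v ?x) \<bullet> (diag_conj f *\<^sub>v ?x) = (f i)\<^sup>2"
    unfolding norm_square_diag_conj_mult_vec[OF x]
    by (simp add: transpose_mult_vec_cancel sum_mult_unit_vec_square[OF i])
  ultimately show "\<bar>f i\<bar> \<in> {sqrt ((diag_conj f *\<^sub>v x) \<bullet> (diag_conj f *\<^sub>v x)) |x.
      x \<in> carrier_vec (dim_col (diag_conj f)) \<and> x \<bullet> x \<le> 1}"
    using x by (auto intro!: exI[of _ ?x])
  have bound: "\<bar>f j\<bar> \<le> (\<Sum>k<n. \<bar>f k\<bar>)" if "j < n" for j
    using that by (intro member_le_sum) auto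
  show "bdd_above {sqrt ((diag_conj f *\<^sub>v x) \<bullet> (diag_conj f *\<^sub>v x)) |x.
      x \<in> carrier_vec (dim_col (diag_conj f)) \<and> x \<bullet> x \<le> 1}"
  proof -
    have "0 \<le> (\<Sum>k<n. \<bar>f k\<bar>)" by (intro sum_nonneg) auto
    from bdd_aboveI[OF op_norm_diag_conj_bound[of _ f, OF this bound]] show ?thesis .
  qed
qed

lemma cov_splitting_transfer:
  assumes cs: "cov_splitting n S S1 (diag_conj (\<lambda>i. f i + g i))"
    and f: "\<And>i. i < n \<Longrightarrow> 0 \<le> f i" and g: "\<And>i. i < n \<Longrightarrow> 0 \<le> g i"
    and disjoint: "\<And>i. f i * g i = 0"
  shows "cov_splitting n S (S1 + diag_conj f) (diag_conj g)"
proof -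
  let ?S2 = "diag_conj (\<lambda>i. f i + g i)"
  from cs have S1: "S1 \<in> carrier_mat n n" and "psd S1" and S: "S = S1 + ?S2"
    and orth: "\<And>u v. u \<in> col_space S1 \<Longrightarrow> v \<in> col_space ?S2 \<Longrightarrow> u \<bullet> v = 0"
    unfolding cov_splitting_def by auto
  have "psd (S1 + diag_conj f)" using \<open>psd S1\<close> psd_diag_conj[OF f] S1 by (intro psd_add) auto
  moreover have "S = (S1 + diag_conj f) + diag_conj g"
    unfolding S diag_conj_add[symmetric] using S1 by (simp add: assoc_add_mat[of _ n n])
  moreover have "u \<bullet> v = 0" if u: "u \<in> col_space (S1 + diag_conj f)" and v: "v \<in> col_space (diag_conj g)" for u v
  proof -
    obtain a where a: "a \<in> carrier_vec n" and ua: "u = (S1 + diag_conj f) *\<^sub>v a"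
      using u S1 unfolding col_space_def by auto
    obtain b where b: "b \<in> carrier_vec n" and vb: "v = diag_conj g *\<^sub>v b"
      using v unfolding col_space_def by auto
    \<comment> \<open>diag_conj g is S2 times the projection onto the support of g.\<close>
    have "diag_conj g = ?S2 * diag_conj (\<lambda>i. of_bool (f i = 0))"
      unfolding diag_conj_mult using disjoint by (intro arg_cong[of _ _ diag_conj]) (auto simp: fun_eq_iff)
    then have "v = ?S2 *\<^sub>v (diag_conj (\<lambda>i. of_bool (f i = 0)) *\<^sub>v b)"
      unfolding vb using b by (simp add: assoc_mult_mat_vec[of _ n n _ n])
    then have v2: "v \<in> col_space ?S2"
      unfolding col_space_def dim_diag_conj using mult_mat_vec_carrier[OF diag_conj_carrier b] by blast
    have u_split: "u = S1 *\<^sub>v a + diag_conj f *\<^sub>v a"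
      unfolding ua using S1 a by (simp add: add_mult_distrib_mat_vec[of _ n n])
    have "u \<bullet> v = (S1 *\<^sub>v a) \<bullet> v + (diag_conj f *\<^sub>v a) \<bullet> (diag_conj g *\<^sub>v b)"
      unfolding vb u_split by (rule add_scalar_prod_distrib[OF mult_mat_vec_carrier[OF S1 a]
          mult_mat_vec_carrier[OF diag_conj_carrier a] mult_mat_vec_carrier[OF diag_conj_carrier b]])
    also have "(S1 *\<^sub>v a) \<bullet> v = 0"
      using S1 a by (intro orth v2) (auto simp: col_space_def)
    also have "(diag_conj f *\<^sub>v a) \<bullet> (diag_conj g *\<^sub>v b) = 0"
      unfolding scalar_prod_diag_conj_mult_vec[OF a b] using disjoint by simp
    finally show ?thesis by simp
  qed
  ultimately show ?thesis
    unfolding cov_splitting_def using S1 psd_diag_conj[OF g] by auto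
qed

lemma rank_diag_conj_above_threshold:
  assumes "0 < \<tau>"
  shows "real (vec_space.rank n (diag_conj (\<lambda>i. if \<tau> < f i then f i else 0))) * \<tau>\<^sup>2
    \<le> mat_trace (diag_conj f * diag_conj f)"
proof -
  have "{k. k < n \<and> (if \<tau> < f k then f k else 0) \<noteq> 0} = {i \<in> {..<n}. \<tau> < f i}"
    using assms by auto
  then have "vec_space.rank n (diag_conj (\<lambda>i. if \<tau> < f i then f i else 0)) \<le> card {i \<in> {..<n}. \<tau> < f i}"
    using rank_diag_conj[of "\<lambda>i. if \<tau> < f i then f i else 0"] by simp
  then have "real (vec_space.rank n (diag_conj (\<lambda>i. if \<tau> < f i then f i else 0))) * \<tau>\<^sup>2
      \<le> real (card {i \<in> {..<n}. \<tau> < f i}) * \<tau>\<^sup>2"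
    by (intro mult_right_mono) auto
  also have "\<dots> \<le> (\<Sum>i<n. (f i)\<^sup>2)"
    using assms by (intro card_above_threshold_le) auto
  also have "\<dots> = mat_trace (diag_conj f * diag_conj f)"
    by (simp add: diag_conj_mult mat_trace_diag_conj power2_eq_square)
  finally show ?thesis .
qed

lemma diag_conj_trace_pos:
  assumes f: "\<And>i. i < n \<Longrightarrow> 0 \<le> f i" and pos: "0 < mat_trace (diag_conj f)"
  shows "0 < op_norm (diag_conj f)" and "0 < mat_trace (diag_conj f * diag_conj f)"
proof -
  have "\<exists>i<n. 0 < f i"
  proof (rule ccontr)
    assume "\<not> (\<exists>i<n. 0 < f i)"
    then have "mat_trace (diag_conj f) \<le> 0" unfolding mat_trace_diag_conj by (intro sum_nonpos) auto
    with pos show False by simp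
  qed
  then obtain i where i: "i < n" "0 < f i" by blast
  have "0 < \<bar>f i\<bar>" using i by simp
  also have "\<bar>f i\<bar> \<le> op_norm (diag_conj f)" by (rule op_norm_diag_conj_ge[OF i(1)])
  finally show "0 < op_norm (diag_conj f)" .
  show "0 < mat_trace (diag_conj f * diag_conj f)"
    unfolding diag_conj_mult mat_trace_diag_conj using i f by (intro sum_pos2[of _ i]) auto
qed

end

lemma psd_orthogonal_diagonalization:
  assumes S: "S \<in> carrier_mat n n" and "psd S"
  shows "\<exists>Q f. real_orthogonal n Q \<and> S = real_orthogonal.diag_conj n Q f \<and> (\<forall>i<n. 0 \<le> f i)"
proof -
  have "S\<^sup>T = S" using \<open>psd S\<close> unfolding psd_def by simp
  then obtain Q f where Q: "real_orthogonal n Q" and QSQ: "Q\<^sup>T * S * Q = mat_diag n f"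
    using real_symmetric_mat_orthogonal_diagonalization[OF S] by blast
  interpret real_orthogonal n Q by (fact Q)
  have S_eq: "S = diag_conj f"
  proof -
    have "diag_conj f = (Q * Q\<^sup>T) * S * (Q * Q\<^sup>T)"
      unfolding diag_conj_def QSQ[symmetric] using S
      by (simp add: carrier_simps assoc_mult_mat[of _ n n _ n _ n])
    then show ?thesis using S by (simp add: mult_transpose_self)
  qed
  have "0 \<le> f i" if i: "i < n" for i
  proof -
    let ?x = "Q *\<^sub>v unit_vec n i"
    have x: "?x \<in> carrier_vec n" using carrier by simp
    have "?x \<bullet> (S *\<^sub>v ?x) = f i"
      unfolding S_eq quadratic_form_diag_conj[OF x]
      by (simp add: transpose_mult_vec_cancel sum_mult_unit_vec_square[OF i])
    moreover have "0 \<le> ?x \<bullet> (S *\<^sub>v ?x)" using \<open>psd S\<close> x S unfolding psd_def by auto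
    ultimately show ?thesis by simp
  qed
  with Q S_eq show ?thesis by blast
qed

section \<open>Truncating the second part of a covariance splitting\<close>

lemma psd_mat_trace_nonneg:
  assumes "S \<in> carrier_mat n n" "psd S"
  shows "0 \<le> mat_trace S" and "0 \<le> mat_trace (S * S)"
proof -
  obtain Q f where Q: "real_orthogonal n Q" and S: "S = real_orthogonal.diag_conj n Q f"
    and f: "\<forall>i<n. 0 \<le> f i"
    using psd_orthogonal_diagonalization[OF assms] by blast
  interpret real_orthogonal n Q by (fact Q)
  show "0 \<le> mat_trace S" "0 \<le> mat_trace (S * S)"
    unfolding S diag_conj_mult mat_trace_diag_conj using f by (auto intro: sum_nonneg)
qed

lemma cov_splitting_truncate:
  assumes cs: "cov_splitting d S S1 S2" and tau: "0 < \<tau>"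
  obtains S1' S2' where "cov_splitting d S S1' S2'"
    and "real (vec_space.rank d S1') \<le> real (vec_space.rank d S1) + mat_trace (S2 * S2) / \<tau>\<^sup>2"
    and "mat_trace S2 - mat_trace (S2 * S2) / \<tau> \<le> mat_trace S2'"
    and "mat_trace S2' \<le> mat_trace S2"
    and "mat_trace (S2' * S2') \<le> mat_trace (S2 * S2)"
    and "0 < mat_trace S2' \<Longrightarrow> 0 < op_norm S2' \<and> op_norm S2' \<le> \<tau> \<and> 0 < mat_trace (S2' * S2')"
proof -
  from cs have S1: "S1 \<in> carrier_mat d d" and S2: "S2 \<in> carrier_mat d d" and "psd S2"
    unfolding cov_splitting_def by auto
  obtain Q l where Q: "real_orthogonal d Q" and S2_eq: "S2 = real_orthogonal.diag_conj d Q l"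
    and l: "\<forall>i<d. 0 \<le> l i"
    using psd_orthogonal_diagonalization[OF S2 \<open>psd S2\<close>] by blast
  interpret real_orthogonal d Q by (fact Q)
  define lb where "lb i = (if \<tau> < l i then l i else 0)" for i
  define ls where "ls i = (if \<tau> < l i then 0 else l i)" for i
  have "l = (\<lambda>i. lb i + ls i)" by (auto simp: lb_def ls_def)
  then have "cov_splitting d S S1 (diag_conj (\<lambda>i. lb i + ls i))" using cs S2_eq by simp
  then have cs': "cov_splitting d S (S1 + diag_conj lb) (diag_conj ls)"
    by (rule cov_splitting_transfer) (use l tau in \<open>auto simp: lb_def ls_def\<close>)
  have tr: "mat_trace S2 = (\<Sum>i<d. l i)" and sq: "mat_trace (S2 * S2) = (\<Sum>i<d. (l i)\<^sup>2)"
    unfolding S2_eq diag_conj_mult mat_trace_diag_conj by (simp_all add: power2_eq_square)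
  have tr': "mat_trace (diag_conj ls) = (\<Sum>i<d. ls i)"
    and sq': "mat_trace (diag_conj ls * diag_conj ls) = (\<Sum>i<d. (ls i)\<^sup>2)"
    unfolding diag_conj_mult mat_trace_diag_conj by (simp_all add: power2_eq_square)
  have "vec_space.rank d (S1 + diag_conj lb) \<le> vec_space.rank d S1 + vec_space.rank d (diag_conj lb)"
    by (rule vec_space.rank_subadditive[OF S1 diag_conj_carrier])
  moreover have "real (vec_space.rank d (diag_conj lb)) \<le> mat_trace (S2 * S2) / \<tau>\<^sup>2"
    using rank_diag_conj_above_threshold[OF tau, of l] tau unfolding S2_eq lb_def
    by (simp add: field_simps)
  ultimately have rank: "real (vec_space.rank d (S1 + diag_conj lb))
      \<le> real (vec_space.rank d S1) + mat_trace (S2 * S2) / \<tau>\<^sup>2" by linarith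
  have "mat_trace S2 - mat_trace (diag_conj ls) = (\<Sum>i<d. if \<tau> < l i then l i else 0)"
    unfolding tr tr' sum_subtractf[symmetric] by (intro sum.cong) (auto simp: ls_def)
  also have "\<dots> \<le> mat_trace (S2 * S2) / \<tau>"
    unfolding sq by (rule sum_above_threshold_le[OF tau])
  finally have lower: "mat_trace S2 - mat_trace (S2 * S2) / \<tau> \<le> mat_trace (diag_conj ls)" by simp
  have upper: "mat_trace (diag_conj ls) \<le> mat_trace S2"
    unfolding tr tr' using l by (intro sum_mono) (auto simp: ls_def)
  have upper_sq: "mat_trace (diag_conj ls * diag_conj ls) \<le> mat_trace (S2 * S2)"
    unfolding sq sq' using l by (intro sum_mono) (auto simp: ls_def)
  have ls: "\<And>i. i < d \<Longrightarrow> 0 \<le> ls i" "\<And>i. i < d \<Longrightarrow> \<bar>ls i\<bar> \<le> \<tau>"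
    using l tau by (auto simp: ls_def)
  have "op_norm (diag_conj ls) \<le> \<tau>" using tau ls(2) by (intro op_norm_diag_conj_le) auto
  with diag_conj_trace_pos[of ls, OF ls(1)] show thesis
    using that[OF cs' rank lower upper upper_sq] by blast
qed

lemma cov_splitting_truncate_balanced:
  fixes m g :: real
  assumes cs: "cov_splitting d S S1 S2" and m: "0 < m" and g: "2 \<le> g"
    and t: "0 < mat_trace S2"
    and balance: "(mat_trace S2)\<^sup>2 = g ^ 4 * m * mat_trace (S2 * S2)"
  obtains S1' S2' where "cov_splitting d S S1' S2'"
    and "real (vec_space.rank d S1') \<le> real (vec_space.rank d S1) + m / g\<^sup>2"
    and "0 \<le> mat_trace S2'" and "mat_trace S2' \<le> mat_trace S2"
    and "m * g / 2 \<le> mat_trace S2' / op_norm S2'"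
    and "(mat_trace S2)\<^sup>2 / mat_trace (S2 * S2) / 4 \<le> (mat_trace S2')\<^sup>2 / mat_trace (S2' * S2')"
proof -
  define t where "t = mat_trace S2"
  define q where "q = mat_trace (S2 * S2)"
  have "0 < (mat_trace S2)\<^sup>2" using t by simp
  then have "0 < g ^ 4 * m * q" unfolding balance q_def .
  moreover have "0 < g ^ 4 * m" using m g by (intro mult_pos_pos) auto
  ultimately have q: "0 < q" by (simp add: zero_less_mult_iff)
  define \<tau> where "\<tau> = t / (m * g)"
  have tau: "0 < \<tau>" unfolding \<tau>_def t_def using t m g by simp
  \<comment> \<open>This threshold turns the Chebyshev bounds into rank m / g^2 and trace loss t / g^3.\<close>
  have q_tau2: "q / \<tau>\<^sup>2 = m / g\<^sup>2" and q_tau: "q / \<tau> = t / g ^ 3" and t_tau: "t / \<tau> = m * g"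
    using balance m g t q unfolding \<tau>_def t_def[symmetric] q_def[symmetric]
    by (simp_all add: field_simps power2_eq_square power3_eq_cube power4_eq_xxxx)
  obtain S1' S2' where cs': "cov_splitting d S S1' S2'"
    and rank: "real (vec_space.rank d S1') \<le> real (vec_space.rank d S1) + q / \<tau>\<^sup>2"
    and lower: "t - q / \<tau> \<le> mat_trace S2'" and upper: "mat_trace S2' \<le> t"
    and upper_sq: "mat_trace (S2' * S2') \<le> q"
    and op: "0 < mat_trace S2' \<Longrightarrow> 0 < op_norm S2' \<and> op_norm S2' \<le> \<tau> \<and> 0 < mat_trace (S2' * S2')"
    using cov_splitting_truncate[OF cs tau] unfolding t_def q_def by metis
  have "t / g ^ 3 \<le> t / 2"
    using t g power_mono[OF g, of 3] unfolding t_def by (intro divide_left_mono) auto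
  then have half: "t / 2 \<le> mat_trace S2'" using lower q_tau by linarith
  then have pos: "0 < mat_trace S2'" using t unfolding t_def by simp
  note op = op[OF pos]
  have "m * g / 2 = (t / 2) / \<tau>" using t_tau by (simp add: field_simps)
  also have "\<dots> \<le> mat_trace S2' / \<tau>" using half tau by (intro divide_right_mono) auto
  also have "\<dots> \<le> mat_trace S2' / op_norm S2'" using op pos by (intro divide_left_mono) auto
  finally have ratio: "m * g / 2 \<le> mat_trace S2' / op_norm S2'" .
  have "t\<^sup>2 / q / 4 = (t / 2)\<^sup>2 / q" by (simp add: power2_eq_square)
  also have "\<dots> \<le> (mat_trace S2')\<^sup>2 / q"
    using half t q unfolding t_def by (intro divide_right_mono power_mono) auto
  also have "\<dots> \<le> (mat_trace S2')\<^sup>2 / mat_trace (S2' * S2')"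
    using op upper_sq by (intro divide_left_mono) auto
  finally have effrank: "t\<^sup>2 / q / 4 \<le> (mat_trace S2')\<^sup>2 / mat_trace (S2' * S2')" .
  show thesis
    using that[OF cs' _ _ _ ratio] rank q_tau2 pos upper effrank unfolding t_def q_def by simp
qed

section \<open>Choosing the threshold along the sequence\<close>

lemma fourth_root_ratio_balance:
  fixes t q m :: real
  assumes t: "0 \<le> t" and m: "0 < m" and g: "2 \<le> sqrt (sqrt (t\<^sup>2 / q / m))"
  shows "0 < t" and "t\<^sup>2 = (sqrt (sqrt (t\<^sup>2 / q / m))) ^ 4 * m * q"
proof -
  have x: "0 < t\<^sup>2 / q / m"
  proof (rule ccontr)
    assume "\<not> 0 < t\<^sup>2 / q / m"
    then have "sqrt (sqrt (t\<^sup>2 / q / m)) \<le> 0" by (simp only: real_sqrt_le_0_iff not_less)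
    with g show False by linarith
  qed
  then show "0 < t" using t by (cases "t = 0") auto
  have "(sqrt (sqrt (t\<^sup>2 / q / m))) ^ 4 = ((sqrt (sqrt (t\<^sup>2 / q / m)))\<^sup>2)\<^sup>2" by (simp flip: power_mult)
  also have "\<dots> = t\<^sup>2 / q / m" using x by simp
  finally show "t\<^sup>2 = (sqrt (sqrt (t\<^sup>2 / q / m))) ^ 4 * m * q" using x m by (auto simp: field_simps)
qed

lemma filterlim_sqrt_sqrt_div_at_top:
  fixes f :: "nat \<Rightarrow> real"
  assumes "f \<in> \<omega>(\<lambda>n. real n)" and "\<And>n. 0 \<le> f n"
  shows "filterlim (\<lambda>n. sqrt (sqrt (f n / real n))) at_top sequentially"
proof -
  have "filterlim (\<lambda>n. norm (f n / real n)) at_top sequentially"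
    using smallomegaD_filterlim_at_top_norm[OF assms(1)] eventually_gt_at_top[of 0]
    by (simp add: eventually_mono)
  then have "filterlim (\<lambda>n. f n / real n) at_top sequentially" using assms(2) by simp
  then show ?thesis by (intro filterlim_compose[OF sqrt_at_top])+
qed

lemma cov_splitting_sequence_truncate:
  fixes S S1 S2 :: "nat \<Rightarrow> real mat"
  assumes cs: "\<And>n. cov_splitting (d n) (S n) (S1 n) (S2 n)"
    and ratio_large: "(\<lambda>n. (mat_trace (S2 n))\<^sup>2 / mat_trace (S2 n * S2 n)) \<in> \<omega>(\<lambda>n. real n)"
  obtains A B and g :: "nat \<Rightarrow> real"
  where "\<And>n. cov_splitting (d n) (S n) (A n) (B n)" and "filterlim g at_top sequentially"
    and "\<forall>\<^sub>F n in sequentially.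
      real (vec_space.rank (d n) (A n)) \<le> real (vec_space.rank (d n) (S1 n)) + real n / (g n)\<^sup>2 \<and>
      0 \<le> mat_trace (B n) \<and> mat_trace (B n) \<le> mat_trace (S2 n) \<and>
      real n * g n / 2 \<le> mat_trace (B n) / op_norm (B n) \<and>
      (mat_trace (S2 n))\<^sup>2 / mat_trace (S2 n * S2 n) / 4 \<le> (mat_trace (B n))\<^sup>2 / mat_trace (B n * B n)"
proof -
  define g where "g n = sqrt (sqrt ((mat_trace (S2 n))\<^sup>2 / mat_trace (S2 n * S2 n) / real n))" for n
  have nonneg: "0 \<le> mat_trace (S2 n)" "0 \<le> mat_trace (S2 n * S2 n)" for n
    using psd_mat_trace_nonneg[of "S2 n" "d n"] cs[of n] unfolding cov_splitting_def by auto
  have g_top: "filterlim g at_top sequentially"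
    unfolding g_def using nonneg by (intro filterlim_sqrt_sqrt_div_at_top[OF ratio_large]) simp
  define bounded where "bounded n A' B' \<longleftrightarrow>
      real (vec_space.rank (d n) A') \<le> real (vec_space.rank (d n) (S1 n)) + real n / (g n)\<^sup>2 \<and>
      0 \<le> mat_trace B' \<and> mat_trace B' \<le> mat_trace (S2 n) \<and>
      real n * g n / 2 \<le> mat_trace B' / op_norm B' \<and>
      (mat_trace (S2 n))\<^sup>2 / mat_trace (S2 n * S2 n) / 4 \<le> (mat_trace B')\<^sup>2 / mat_trace (B' * B')"
    for n and A' B' :: "real mat"
  have "\<exists>A' B'. cov_splitting (d n) (S n) A' B' \<and> (0 < n \<and> 2 \<le> g n \<longrightarrow> bounded n A' B')" for n
  proof (cases "0 < n \<and> 2 \<le> g n")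
    case True
    then have "0 < real n" "2 \<le> g n" by auto
    note balance = fourth_root_ratio_balance[OF nonneg(1) this[unfolded g_def], folded g_def]
    show ?thesis
      using cov_splitting_truncate_balanced[OF cs \<open>0 < real n\<close> \<open>2 \<le> g n\<close> balance]
      unfolding bounded_def by metis
  qed (use cs in blast)
  then obtain A B where AB: "\<And>n. cov_splitting (d n) (S n) (A n) (B n)"
    and bounds: "\<And>n. 0 < n \<and> 2 \<le> g n \<Longrightarrow> bounded n (A n) (B n)"
    by metis
  have "\<forall>\<^sub>F n in sequentially. 0 < n \<and> 2 \<le> g n"
    using eventually_gt_at_top[of 0] g_top[unfolded filterlim_at_top, rule_format, of 2]
    by eventually_elim simp
  from AB g_top eventually_mono[OF this bounds] show thesis unfolding bounded_def by (rule that)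
qed

lemma smallo_upper_bound:
  fixes f g :: "'a \<Rightarrow> real"
  assumes "\<forall>\<^sub>F x in F. 0 \<le> f x \<and> f x \<le> g x" and "g \<in> o[F](h)"
  shows "f \<in> o[F](h)"
proof -
  have "\<forall>\<^sub>F x in F. norm (f x) \<le> norm (g x)"
    using assms(1) by eventually_elim auto
  then have "f \<in> O[F](g)" by (rule landau_o.big_mono)
  then show ?thesis using assms(2) by (rule landau_o.big_small_trans)
qed

lemma smallomega_lower_bound:
  fixes f g :: "'a \<Rightarrow> real"
  assumes "\<forall>\<^sub>F x in F. 0 \<le> g x \<and> c * g x \<le> f x" and "0 < c" and "g \<in> \<omega>[F](h)"
  shows "f \<in> \<omega>[F](h)"
proof -
  have "\<forall>\<^sub>F x in F. c * norm (g x) \<le> norm (f x)"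
    using assms(1) by eventually_elim auto
  then have "f \<in> \<Omega>[F](g)" by (rule landau_omega.bigI[OF assms(2)])
  then show ?thesis using assms(3) by (rule landau_omega.big_small_trans)
qed

lemma smallo_real_div_at_top:
  fixes g :: "nat \<Rightarrow> real"
  assumes "filterlim g at_top sequentially"
  shows "(\<lambda>n. real n / g n) \<in> o(\<lambda>n. real n)"
proof (rule smalloI_tendsto)
  have "\<forall>\<^sub>F n in sequentially. inverse (g n) = real n / g n / real n"
    using eventually_gt_at_top[of 0] by eventually_elim (simp add: divide_inverse)
  with tendsto_inverse_0_at_top[OF assms]
  show "((\<lambda>n. real n / g n / real n) \<longlongrightarrow> 0) sequentially"
    by (rule Lim_transform_eventually)
  show "\<forall>\<^sub>F n in sequentially. real n \<noteq> 0"
    using eventually_gt_at_top[of 0] by eventually_elim simp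
qed

lemma smallomega_real_mult_at_top:
  fixes g :: "nat \<Rightarrow> real"
  assumes "filterlim g at_top sequentially"
  shows "(\<lambda>n. real n * g n) \<in> \<omega>(\<lambda>n. real n)"
proof (rule smallomegaI_filterlim_at_top_norm)
  have "\<forall>\<^sub>F n in sequentially. g n = norm (real n * g n / real n)"
    using eventually_gt_at_top[of 0] assms[unfolded filterlim_at_top, rule_format, of 0]
    by eventually_elim simp
  from filterlim_cong[OF refl refl this] assms
  show "filterlim (\<lambda>n. norm (real n * g n / real n)) at_top sequentially" by simp
qed

theorem theorem8:
  fixes \<Sigma> :: "nat \<Rightarrow> real mat" and d :: "nat \<Rightarrow> nat"
  assumes dims: "\<And>n. \<Sigma> n \<in> carrier_mat (d n) (d n)"
    and psd: "\<And>n. psd (\<Sigma> n)"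
    and split: "\<exists>S1 S2 :: nat \<Rightarrow> real mat.
        (\<forall>n. cov_splitting (d n) (\<Sigma> n) (S1 n) (S2 n)) \<and>
        (\<lambda>n. real (vec_space.rank (d n) (S1 n))) \<in> o(\<lambda>n. real n) \<and>
        (\<lambda>n. mat_trace (S2 n)) \<in> o(\<lambda>n. real n) \<and>
        (\<lambda>n. (mat_trace (S2 n))\<^sup>2 / mat_trace (S2 n * S2 n)) \<in> \<omega>(\<lambda>n. real n)"
  shows "\<exists>S1 S2 :: nat \<Rightarrow> real mat.
        (\<forall>n. cov_splitting (d n) (\<Sigma> n) (S1 n) (S2 n)) \<and>
        (\<lambda>n. real (vec_space.rank (d n) (S1 n))) \<in> o(\<lambda>n. real n) \<and>
        (\<lambda>n. mat_trace (S2 n)) \<in> o(\<lambda>n. real n) \<and>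
        (\<lambda>n. mat_trace (S2 n) / op_norm (S2 n)) \<in> \<omega>(\<lambda>n. real n) \<and>
        (\<lambda>n. (mat_trace (S2 n))\<^sup>2 / mat_trace (S2 n * S2 n)) \<in> \<omega>(\<lambda>n. real n)"
proof -
  from split obtain S1 S2 :: "nat \<Rightarrow> real mat"
    where cs: "\<And>n. cov_splitting (d n) (\<Sigma> n) (S1 n) (S2 n)"
      and rank_small: "(\<lambda>n. real (vec_space.rank (d n) (S1 n))) \<in> o(\<lambda>n. real n)"
      and trace_small: "(\<lambda>n. mat_trace (S2 n)) \<in> o(\<lambda>n. real n)"
      and ratio_large: "(\<lambda>n. (mat_trace (S2 n))\<^sup>2 / mat_trace (S2 n * S2 n)) \<in> \<omega>(\<lambda>n. real n)"
    by blast
  have ratio_nonneg: "0 \<le> (mat_trace (S2 n))\<^sup>2 / mat_trace (S2 n * S2 n)" for n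
    using psd_mat_trace_nonneg(2)[of "S2 n" "d n"] cs[of n] unfolding cov_splitting_def by auto
  obtain A B and g :: "nat \<Rightarrow> real" where AB: "\<And>n. cov_splitting (d n) (\<Sigma> n) (A n) (B n)"
    and g_top: "filterlim g at_top sequentially" and bounds: "\<forall>\<^sub>F n in sequentially.
      real (vec_space.rank (d n) (A n)) \<le> real (vec_space.rank (d n) (S1 n)) + real n / (g n)\<^sup>2 \<and>
      0 \<le> mat_trace (B n) \<and> mat_trace (B n) \<le> mat_trace (S2 n) \<and>
      real n * g n / 2 \<le> mat_trace (B n) / op_norm (B n) \<and>
      (mat_trace (S2 n))\<^sup>2 / mat_trace (S2 n * S2 n) / 4 \<le> (mat_trace (B n))\<^sup>2 / mat_trace (B n * B n)"
    using cov_splitting_sequence_truncate[OF cs ratio_large] by blast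
  have "(\<lambda>n. real (vec_space.rank (d n) (S1 n)) + real n / (g n)\<^sup>2) \<in> o(\<lambda>n. real n)"
    using rank_small smallo_real_div_at_top[OF filterlim_pow_at_top[OF _ g_top]] by (simp add: sum_in_smallo)
  moreover have "\<forall>\<^sub>F n in sequentially. 0 \<le> real (vec_space.rank (d n) (A n)) \<and>
      real (vec_space.rank (d n) (A n)) \<le> real (vec_space.rank (d n) (S1 n)) + real n / (g n)\<^sup>2"
    using bounds by eventually_elim simp
  ultimately have rank: "(\<lambda>n. real (vec_space.rank (d n) (A n))) \<in> o(\<lambda>n. real n)"
    by (rule smallo_upper_bound[rotated])
  have "\<forall>\<^sub>F n in sequentially. 0 \<le> mat_trace (B n) \<and> mat_trace (B n) \<le> mat_trace (S2 n)"
    using bounds by eventually_elim simp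
  then have trace: "(\<lambda>n. mat_trace (B n)) \<in> o(\<lambda>n. real n)"
    using trace_small by (rule smallo_upper_bound)
  have "\<forall>\<^sub>F n in sequentially. 0 \<le> real n * g n \<and> 1/2 * (real n * g n) \<le> mat_trace (B n) / op_norm (B n)"
    using bounds g_top[unfolded filterlim_at_top, rule_format, of 0] by eventually_elim simp
  then have op: "(\<lambda>n. mat_trace (B n) / op_norm (B n)) \<in> \<omega>(\<lambda>n. real n)"
    by (rule smallomega_lower_bound[OF _ _ smallomega_real_mult_at_top[OF g_top]]) simp
  have "\<forall>\<^sub>F n in sequentially. 0 \<le> (mat_trace (S2 n))\<^sup>2 / mat_trace (S2 n * S2 n) \<and>
      1/4 * ((mat_trace (S2 n))\<^sup>2 / mat_trace (S2 n * S2 n)) \<le> (mat_trace (B n))\<^sup>2 / mat_trace (B n * B n)"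
    using bounds by eventually_elim (simp add: ratio_nonneg)
  then have effrank: "(\<lambda>n. (mat_trace (B n))\<^sup>2 / mat_trace (B n * B n)) \<in> \<omega>(\<lambda>n. real n)"
    by (rule smallomega_lower_bound[OF _ _ ratio_large]) simp
  show ?thesis using AB rank trace op effrank by blast
qed

end
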